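(* Let $I$ be a resident-minimal instance and $(r_0,h_0)\in\mathrm{tent}(I)\setminus\mathrm{pend}(I)$. Then there is a (general) prescription $(P,X)$ for $I$ with $(r_0,h_0)\in\mathrm{tgs}(P,X)$ if and only if there is a resident-changeless and hospital-complete extension $I'$ of $I$ and a prescription $(P,Y)$ for $I'$ with $(r_0,h_0)\in\mathrm{tgs}(P,Y)$.
   Context: An instance $I$ consists of finite disjoint sets $R$ (residents) and $H$ (hospitals), a positive integer quota $q_h$ for each $h\in H$, for each $r\in R$ a preference list of $r$ (a sequence of distinct members of $H$, not necessarily all), and for each $h\in H$ a preference list of $h$ (a sequence of distinct members of $R$). Instances considered together share $R,H$ and quotas. A list is complete if it contains every member of the opposite side; an instance is hospital-complete if every hospital's list is complete. A match is a pair $(r,h)\in R\times H$. For a set $M$ of matches, $\mathrm{res}_h M=\{r:(r,h)\in M\}$, $\mathrm{res}\,M=\{r:(r,h)\in M\text{ for some }h\}$. $J$ is an extension of $I$ if every list of $J$ has the corresponding list of $I$ as a prefix; it is resident-changeless if every resident's list is the same in $I$ and $J$. An event is $(r,h)^+$ (proposal) or $(r,h)^-$ (rejection). For an event sequence $\sigma$, $\mathrm{prop}(\sigma)$, $\mathrm{rej}(\sigma)$ are the sets of matches proposed/rejected in $\sigma$, $\mathrm{tent}(\sigma)=\mathrm{prop}(\sigma)\setminus\mathrm{rej}(\sigma)$, and $\mathrm{pend}_I(\sigma)$ is the set of $(r,h)\in\mathrm{tent}(\sigma)$ with $r$ not on the list of $h$ in $I$. A match $(r,h)\in M$ is ousted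 from $M$ in $I$ if the list of $h$ in $I$ contains at least $q_h$ residents of $\mathrm{res}_h M$ and either $r$ is not on it or $r$ is preceded on it by at least $q_h$ residents of $\mathrm{res}_h M$. $I$-feasible sequences: the empty sequence is $I$-feasible; if $\sigma$ is $I$-feasible then $\sigma+(r,h)^+$ is $I$-feasible if $r\notin\mathrm{res}\,\mathrm{tent}(\sigma)$, $(r,h)\notin\mathrm{prop}(\sigma)$, $h$ is on the list of $r$ in $I$ and $(r,h')\in\mathrm{rej}(\sigma)$ for every $h'$ preceding $h$ on it; and $\sigma+(r,h)^-$ is $I$-feasible if $(r,h)$ is ousted from $\mathrm{prop}(\sigma)$ in $I$ and $(r,h)\notin\mathrm{rej}(\sigma)$. All maximal $I$-feasible sequences contain the same events; $\mathrm{prop}(I),\mathrm{rej}(I),\mathrm{tent}(I),\mathrm{pend}(I)$ denote $\mathrm{prop}(\sigma),\mathrm{rej}(\sigma),\mathrm{tent}(\sigma),\mathrm{pend}_I(\sigma)$ for any maximal $I$-feasible $\sigma$. $I$ is resident-minimal if $\mathrm{prop}(I)$ equals the set of matches $(r,h)$ with $h$ on the list of $r$ in $I$. For a resident-minimal instance $I$, a (general) prescription for $I$ is a pair $(P,X)$ of sets of matches such that: (P1) $P\cap\mathrm{prop}(I)=\emptyset$; (P2) for each $r\in R$ there is at most one $h$ with $(r,h)\in P$; (P3) $X\subseteq\mathrm{tent}(I)$; (P4) $\mathrm{res}\,P\cap\mathrm{res}\,\mathrm{tent}(I)\subseteq\mathrm{res}\,X$; (P5) for each $h$, $|\mathrm{res}_h(P\cup(\mathrm{tent}(I)\setminus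 X))|\le q_h$, with equality if $\mathrm{res}_h X\ne\emptyset$; (P6') for each $h$, every member of $\mathrm{res}_h(P\cup((\mathrm{tent}(I)\setminus\mathrm{pend}(I))\setminus X))$ precedes all members of $\mathrm{res}_h(X\setminus\mathrm{pend}(I))$ in the list of $h$ in $I$, and if $\mathrm{res}_h(X\setminus\mathrm{pend}(I))\ne\emptyset$ then $\mathrm{res}_h\,\mathrm{pend}(I)\subseteq\mathrm{res}_h X$. When $I$ is moreover hospital-complete (so $\mathrm{pend}(I)=\emptyset$), (P6') reads: (P6) every member of $\mathrm{res}_h(P\cup(\mathrm{tent}(I)\setminus X))$ precedes all members of $\mathrm{res}_h X$ in the list of $h$. The target set is $\mathrm{tgs}(P,X)=\{(r,h)\in X: r\notin\mathrm{res}\,P\}$. *)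

theory Defs
  imports Main
begin

text \<open>The sets R, H and the quota function q
  are shared by all instances and are passed as explicit parameters.\<close>

record ('r, 'h) sm_instance =
  rlist :: "'r \<Rightarrow> 'h list"
  hlist :: "'h \<Rightarrow> 'r list"

definition wf_instance :: "'r set \<Rightarrow> 'h set \<Rightarrow> ('h \<Rightarrow> nat) \<Rightarrow> ('r, 'h) sm_instance \<Rightarrow> bool" where
  "wf_instance R H q I \<longleftrightarrow>
     finite R \<and> finite H \<and> (\<forall>h\<in>H. 0 < q h) \<and>
     (\<forall>r\<in>R. distinct (rlist I r) \<and> set (rlist I r) \<subseteq> H) \<and>
     (\<forall>h\<in>H. distinct (hlist I h) \<and> set (hlist I h) \<subseteq> R) \<and>
     (\<forall>r. r \<notin> R \<longrightarrow> rlist I r = []) \<and>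
     (\<forall>h. h \<notin> H \<longrightarrow> hlist I h = [])"

definition hospital_complete :: "'r set \<Rightarrow> 'h set \<Rightarrow> ('r, 'h) sm_instance \<Rightarrow> bool" where
  "hospital_complete R H I \<longleftrightarrow> (\<forall>h\<in>H. set (hlist I h) = R)"

definition is_extension :: "'r set \<Rightarrow> 'h set \<Rightarrow> ('r, 'h) sm_instance \<Rightarrow> ('r, 'h) sm_instance \<Rightarrow> bool" where
  "is_extension R H I J \<longleftrightarrow>
     (\<forall>r\<in>R. (\<exists>ys. rlist J r = rlist I r @ ys)) \<and> (\<forall>h\<in>H. (\<exists>ys. hlist J h = hlist I h @ ys))"

definition resident_changeless :: "'r set \<Rightarrow> ('r, 'h) sm_instance \<Rightarrow> ('r, 'h) sm_instance \<Rightarrow> bool" where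
  "resident_changeless R I J \<longleftrightarrow> (\<forall>r\<in>R. rlist J r = rlist I r)"

definition precedes_in :: "'a list \<Rightarrow> 'a \<Rightarrow> 'a \<Rightarrow> bool" where
  "precedes_in L x y \<longleftrightarrow> (\<exists>i j. i < j \<and> j < length L \<and> L ! i = x \<and> L ! j = y)"

definition res_at :: "'h \<Rightarrow> ('r \<times> 'h) set \<Rightarrow> 'r set" where
  "res_at h M = {r. (r, h) \<in> M}"

definition res :: "('r \<times> 'h) set \<Rightarrow> 'r set" where
  "res M = {r. \<exists>h. (r, h) \<in> M}"

datatype ('r, 'h) event = Propose 'r 'h | Reject 'r 'h

definition propS :: "('r, 'h) event list \<Rightarrow> ('r \<times> 'h) set" where
  "propS \<sigma> = {(r, h). Propose r h \<in> set \<sigma>}"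

definition rejS :: "('r, 'h) event list \<Rightarrow> ('r \<times> 'h) set" where
  "rejS \<sigma> = {(r, h). Reject r h \<in> set \<sigma>}"

definition tentS :: "('r, 'h) event list \<Rightarrow> ('r \<times> 'h) set" where
  "tentS \<sigma> = propS \<sigma> - rejS \<sigma>"

definition pendS :: "('r, 'h) sm_instance \<Rightarrow> ('r, 'h) event list \<Rightarrow> ('r \<times> 'h) set" where
  "pendS I \<sigma> = {(r, h) \<in> tentS \<sigma>. r \<notin> set (hlist I h)}"

text \<open>(r,h) in M is ousted from M in I.  The residents preceding r on the list L of h
  are those in takeWhile (\<lambda>x. x \<noteq> r) L (when r is on L).\<close>
definition ousted :: "('h \<Rightarrow> nat) \<Rightarrow> ('r, 'h) sm_instance \<Rightarrow> ('r \<times> 'h) set \<Rightarrow> 'r \<Rightarrow> 'h \<Rightarrow> bool" where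
  "ousted q I M r h \<longleftrightarrow>
     (r, h) \<in> M \<and>
     q h \<le> card (set (hlist I h) \<inter> res_at h M) \<and>
     (r \<notin> set (hlist I h) \<or>
      q h \<le> card (set (takeWhile (\<lambda>x. x \<noteq> r) (hlist I h)) \<inter> res_at h M))"

inductive feasible :: "('h \<Rightarrow> nat) \<Rightarrow> ('r, 'h) sm_instance \<Rightarrow> ('r, 'h) event list \<Rightarrow> bool"
  for q I where
  feasible_Nil: "feasible q I []"
| feasible_Prop: "feasible q I \<sigma> \<Longrightarrow> r \<notin> res (tentS \<sigma>) \<Longrightarrow> (r, h) \<notin> propS \<sigma> \<Longrightarrow>
    h \<in> set (rlist I r) \<Longrightarrow>
    (\<forall>h'. precedes_in (rlist I r) h' h \<longrightarrow> (r, h') \<in> rejS \<sigma>) \<Longrightarrow>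
    feasible q I (\<sigma> @ [Propose r h])"
| feasible_Rej: "feasible q I \<sigma> \<Longrightarrow> ousted q I (propS \<sigma>) r h \<Longrightarrow> (r, h) \<notin> rejS \<sigma> \<Longrightarrow>
    feasible q I (\<sigma> @ [Reject r h])"

definition maximal_feasible :: "('h \<Rightarrow> nat) \<Rightarrow> ('r, 'h) sm_instance \<Rightarrow> ('r, 'h) event list \<Rightarrow> bool" where
  "maximal_feasible q I \<sigma> \<longleftrightarrow> feasible q I \<sigma> \<and> \<not> (\<exists>e. feasible q I (\<sigma> @ [e]))"

text \<open>Some maximal feasible sequence (all such contain the same events, by the paper).\<close>
definition msq :: "('h \<Rightarrow> nat) \<Rightarrow> ('r, 'h) sm_instance \<Rightarrow> ('r, 'h) event list" where
  "msq q I = (SOME \<sigma>. maximal_feasible q I \<sigma>)"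

definition propI :: "('h \<Rightarrow> nat) \<Rightarrow> ('r, 'h) sm_instance \<Rightarrow> ('r \<times> 'h) set" where
  "propI q I = propS (msq q I)"
definition rejI :: "('h \<Rightarrow> nat) \<Rightarrow> ('r, 'h) sm_instance \<Rightarrow> ('r \<times> 'h) set" where
  "rejI q I = rejS (msq q I)"
definition tentI :: "('h \<Rightarrow> nat) \<Rightarrow> ('r, 'h) sm_instance \<Rightarrow> ('r \<times> 'h) set" where
  "tentI q I = tentS (msq q I)"
definition pendI :: "('h \<Rightarrow> nat) \<Rightarrow> ('r, 'h) sm_instance \<Rightarrow> ('r \<times> 'h) set" where
  "pendI q I = pendS I (msq q I)"

definition resident_minimal :: "('h \<Rightarrow> nat) \<Rightarrow> ('r, 'h) sm_instance \<Rightarrow> bool" where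
  "resident_minimal q I \<longleftrightarrow> propI q I = {(r, h). h \<in> set (rlist I r)}"

definition prescription ::
  "'r set \<Rightarrow> 'h set \<Rightarrow> ('h \<Rightarrow> nat) \<Rightarrow> ('r, 'h) sm_instance \<Rightarrow> ('r \<times> 'h) set \<Rightarrow> ('r \<times> 'h) set \<Rightarrow> bool" where
  "prescription R H q I P X \<longleftrightarrow>
     resident_minimal q I \<and> P \<subseteq> R \<times> H \<and> X \<subseteq> R \<times> H \<and>
     P \<inter> propI q I = {} \<and>
     (\<forall>r h h'. (r, h) \<in> P \<longrightarrow> (r, h') \<in> P \<longrightarrow> h = h') \<and>
     X \<subseteq> tentI q I \<and>
     res P \<inter> res (tentI q I) \<subseteq> res X \<and>
     (\<forall>h\<in>H. card (res_at h (P \<union> (tentI q I - X))) \<le> q h \<and>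
             (res_at h X \<noteq> {} \<longrightarrow> card (res_at h (P \<union> (tentI q I - X))) = q h)) \<and>
     (\<forall>h\<in>H. (\<forall>a \<in> res_at h (P \<union> ((tentI q I - pendI q I) - X)).
                \<forall>b \<in> res_at h (X - pendI q I). precedes_in (hlist I h) a b) \<and>
             (res_at h (X - pendI q I) \<noteq> {} \<longrightarrow> res_at h (pendI q I) \<subseteq> res_at h X))"

definition tgs :: "('r \<times> 'h) set \<Rightarrow> ('r \<times> 'h) set \<Rightarrow> ('r \<times> 'h) set" where
  "tgs P X = {(r, h) \<in> X. r \<notin> res P}"

end

theory Submission
  imports Defs
begin

text \<open>Passing to a resident-changeless extension I' of the resident-minimal instance I keeps the
  proposals and can only add rejections: a tentative match of I' is tentative in I, and a
  tentative match of I whose resident is on the hospital's list in I stays tentative in I'.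
  Only pending matches can be lost, and (r0,h0) is not pending.  So a prescription (P,Y) for a
  hospital-complete such I' gives the prescription (P, Y \<union> (tent I - tent I')) for I: the
  matches rejected only in I' go into X, and their hospitals are then full of tentative residents
  not in Y.  Conversely, for a prescription (P,X) of I, complete the list of each hospital h by
  appending first its residents from P and its pending matches outside X, then everyone else.
  Then (P, X \<inter> tent I') is a prescription for the completion: every resident appended before a
  pending match (r,h) outside X is counted in the quota condition of (P,X) together with r, so r
  has fewer than q h predecessors and stays tentative.\<close>

lemma mem_res_at [simp]: "r \<in> res_at h M \<longleftrightarrow> (r, h) \<in> M"
  by (simp add: res_at_def)

lemma mem_res [simp]: "r \<in> res M \<longleftrightarrow> (\<exists>h. (r, h) \<in> M)"
  by (simp add: res_def)

lemma finite_res_at: "M \<subseteq> R \<times> H \<Longrightarrow> finite R \<Longrightarrow> finite (res_at h M)"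
  by (rule finite_subset[of _ R]) auto

lemma precedes_in_mem: "precedes_in L x y \<Longrightarrow> x \<in> set L \<and> y \<in> set L"
  unfolding precedes_in_def by auto

lemma precedes_in_total:
  assumes "x \<in> set L" "y \<in> set L" "x \<noteq> y"
  shows "precedes_in L x y \<or> precedes_in L y x"
proof -
  obtain i j where "i < length L" "L ! i = x" "j < length L" "L ! j = y"
    using assms(1,2) by (auto simp: in_set_conv_nth)
  with assms(3) show ?thesis
    unfolding precedes_in_def by (metis linorder_neqE_nat)
qed

lemma precedes_in_append_left: "precedes_in L x y \<Longrightarrow> precedes_in (L @ ys) x y"
  unfolding precedes_in_def by (metis length_append nth_append trans_less_add1 order.strict_trans)

lemma precedes_in_append_cross:
  assumes "x \<in> set xs" "y \<in> set ys"
  shows "precedes_in (xs @ ys) x y"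
proof -
  obtain i j where "i < length xs" "xs ! i = x" "j < length ys" "ys ! j = y"
    using assms by (auto simp: in_set_conv_nth)
  then show ?thesis
    unfolding precedes_in_def
    by (intro exI[of _ i] exI[of _ "length xs + j"]) (auto simp: nth_append)
qed

lemma precedes_in_append_leftD:
  assumes "precedes_in (L @ ys) x y" "distinct (L @ ys)" "y \<in> set L"
  shows "precedes_in L x y"
proof -
  obtain i j where ij: "i < j" "j < length (L @ ys)" "(L @ ys) ! i = x" "(L @ ys) ! j = y"
    using assms(1) unfolding precedes_in_def by blast
  have "j < length L"
  proof (rule ccontr)
    assume "\<not> j < length L"
    then have "y \<in> set ys" using ij by (auto simp: nth_append)
    then show False using assms(2,3) by auto
  qed
  then show ?thesis
    unfolding precedes_in_def using ij by (intro exI[of _ i] exI[of _ j]) (auto simp: nth_append)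
qed

lemma filter_takeWhile_neq:
  assumes "P x"
  shows "filter P (takeWhile (\<lambda>y. y \<noteq> x) xs) = takeWhile (\<lambda>y. y \<noteq> x) (filter P xs)"
proof (induction xs)
  case (Cons a xs)
  then show ?case using assms by (cases "a = x"; cases "P a") simp_all
qed simp

lemma takeWhile_neq_nth:
  "distinct xs \<Longrightarrow> i < length xs \<Longrightarrow> takeWhile (\<lambda>y. y \<noteq> xs ! i) xs = take i xs"
  by (rule takeWhile_eq_take_P_nth) (use nth_eq_iff_index_eq in blast)+

lemma card_members_with_few_predecessors:
  assumes "distinct L"
  shows "min k (card (set L \<inter> S)) \<le>
    card {x \<in> set L \<inter> S. card (set (takeWhile (\<lambda>y. y \<noteq> x) L) \<inter> S) < k}"
proof -
  define xs where "xs = filter (\<lambda>y. y \<in> S) L"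
  have xs: "distinct xs" "set xs = set L \<inter> S"
    using assms unfolding xs_def by auto
  have "set (take k xs) \<subseteq> {x \<in> set L \<inter> S. card (set (takeWhile (\<lambda>y. y \<noteq> x) L) \<inter> S) < k}"
  proof
    fix x assume "x \<in> set (take k xs)"
    then obtain i where i: "i < k" "i < length xs" "x = xs ! i"
      by (auto simp: in_set_conv_nth)
    have x_mem: "x \<in> set L \<inter> S"
      using i xs(2) nth_mem by metis
    have "set (takeWhile (\<lambda>y. y \<noteq> x) L) \<inter> S =
        set (filter (\<lambda>y. y \<in> S) (takeWhile (\<lambda>y. y \<noteq> x) L))"
      by auto
    also have "\<dots> = set (takeWhile (\<lambda>y. y \<noteq> x) xs)"
      using filter_takeWhile_neq[of "\<lambda>y. y \<in> S" x L] x_mem unfolding xs_def by simp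
    also have "\<dots> = set (take i xs)"
      using takeWhile_neq_nth[OF xs(1) i(2)] i(3) by simp
    finally show "x \<in> {x \<in> set L \<inter> S. card (set (takeWhile (\<lambda>y. y \<noteq> x) L) \<inter> S) < k}"
      using i xs x_mem by (simp add: distinct_card)
  qed
  then have "card (set (take k xs)) \<le>
      card {x \<in> set L \<inter> S. card (set (takeWhile (\<lambda>y. y \<noteq> x) L) \<inter> S) < k}"
    by (rule card_mono[rotated]) simp
  moreover have "card (set L \<inter> S) = length xs" using xs by (metis distinct_card)
  moreover have "card (set (take k xs)) = min (length xs) k" using xs(1) by (simp add: distinct_card)
  ultimately show ?thesis by (simp add: min.commute)
qed

section \<open>Ousting and feasible sequences\<close>

lemma ousted_mono:
  assumes "ousted q I M r h" "M \<subseteq> M'"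
  shows "ousted q I M' r h"
proof -
  have "card (set L \<inter> res_at h M) \<le> card (set L \<inter> res_at h M')" for L
    by (rule card_mono) (use assms(2) in auto)
  then show ?thesis using assms unfolding ousted_def by (meson le_trans subsetD)
qed

lemma ousted_append:
  assumes "hlist J h = hlist I h @ ys" "ousted q I M r h"
  shows "ousted q J M r h"
proof -
  let ?L = "hlist I h"
  have "card (set ?L \<inter> res_at h M) \<le> card (set (hlist J h) \<inter> res_at h M)"
    by (intro card_mono) (auto simp: assms(1))
  then have list: "q h \<le> card (set (hlist J h) \<inter> res_at h M)"
    using assms(2) unfolding ousted_def by linarith
  show ?thesis
  proof (cases "r \<in> set ?L")
    case True
    then have "takeWhile (\<lambda>x. x \<noteq> r) (hlist J h) = takeWhile (\<lambda>x. x \<noteq> r) ?L"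
      by (simp add: assms(1))
    then show ?thesis using assms(2) list True unfolding ousted_def by (simp add: assms(1))
  next
    case False
    then have "takeWhile (\<lambda>x. x \<noteq> r) (hlist J h) = ?L @ takeWhile (\<lambda>x. x \<noteq> r) ys"
      by (simp add: assms(1) takeWhile_append)
    then have "card (set ?L \<inter> res_at h M)
        \<le> card (set (takeWhile (\<lambda>x. x \<noteq> r) (hlist J h)) \<inter> res_at h M)"
      by (intro card_mono) auto
    then show ?thesis using assms(2) list False unfolding ousted_def by auto
  qed
qed

lemma ousted_appendD:
  assumes "hlist J h = hlist I h @ ys" "r \<in> set (hlist I h)" "ousted q J M r h"
  shows "ousted q I M r h"
proof -
  have "takeWhile (\<lambda>x. x \<noteq> r) (hlist J h) = takeWhile (\<lambda>x. x \<noteq> r) (hlist I h)"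
    using assms(1,2) by simp
  moreover have "card (set (takeWhile (\<lambda>x. x \<noteq> r) (hlist I h)) \<inter> res_at h M)
      \<le> card (set (hlist I h) \<inter> res_at h M)"
    by (intro card_mono) (auto dest: set_takeWhileD)
  ultimately show ?thesis using assms unfolding ousted_def by auto
qed

text \<open>Once h is over quota, its first q h listed candidates are never ousted.\<close>
lemma ousted_imp_quota_unousted:
  assumes "distinct (hlist J h)" "ousted q J M r h"
  shows "q h \<le> card {x \<in> set (hlist J h). (x, h) \<in> M \<and> \<not> ousted q J M x h}"
proof -
  let ?L = "hlist J h" and ?S = "res_at h M"
  have "q h \<le> card (set ?L \<inter> ?S)" using assms(2) unfolding ousted_def by blast
  then have "q h \<le> card {x \<in> set ?L \<inter> ?S. card (set (takeWhile (\<lambda>y. y \<noteq> x) ?L) \<inter> ?S) < q h}"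
    using card_members_with_few_predecessors[OF assms(1), of "q h" ?S] by simp
  also have "\<dots> \<le> card {x \<in> set ?L. (x, h) \<in> M \<and> \<not> ousted q J M x h}"
    by (intro card_mono) (auto simp: ousted_def)
  finally show ?thesis .
qed

lemma propS_Nil [simp]: "propS [] = {}"
  and rejS_Nil [simp]: "rejS [] = {}"
  and propS_snoc_Propose [simp]: "propS (\<sigma> @ [Propose r h]) = insert (r, h) (propS \<sigma>)"
  and rejS_snoc_Propose [simp]: "rejS (\<sigma> @ [Propose r h]) = rejS \<sigma>"
  and propS_snoc_Reject [simp]: "propS (\<sigma> @ [Reject r h]) = propS \<sigma>"
  and rejS_snoc_Reject [simp]: "rejS (\<sigma> @ [Reject r h]) = insert (r, h) (rejS \<sigma>)"
  by (auto simp: propS_def rejS_def)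

lemma feasible_rejS_subset_propS: "feasible q J \<sigma> \<Longrightarrow> rejS \<sigma> \<subseteq> propS \<sigma>"
  by (induction rule: feasible.induct) (auto simp: propS_def rejS_def ousted_def)

lemma feasible_propS_in_rlist:
  assumes "feasible q J \<sigma>" "(r, h) \<in> propS \<sigma>"
  shows "h \<in> set (rlist J r) \<and> (\<forall>h'. precedes_in (rlist J r) h' h \<longrightarrow> (r, h') \<in> rejS \<sigma>)"
  using assms by (induction rule: feasible.induct) (auto simp: propS_def)

lemma feasible_tentS_functional:
  assumes "feasible q J \<sigma>" "(r, h) \<in> tentS \<sigma>" "(r, h') \<in> tentS \<sigma>"
  shows "h = h'"
  using assms
proof (induction arbitrary: h h' rule: feasible.induct)
  case (feasible_Prop \<sigma> r' h'')
  then have "(r', h'') \<notin> rejS \<sigma>" using feasible_rejS_subset_propS by blast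
  then have "tentS (\<sigma> @ [Propose r' h'']) = insert (r', h'') (tentS \<sigma>)"
    by (auto simp: tentS_def)
  with feasible_Prop show ?case by auto
qed (auto simp: tentS_def)

lemma feasible_distinct: "feasible q J \<sigma> \<Longrightarrow> distinct \<sigma>"
  by (induction rule: feasible.induct) (auto simp: propS_def rejS_def)

lemma set_events_subset:
  "set \<sigma> \<subseteq> (\<lambda>(r, h). Propose r h) ` propS \<sigma> \<union> (\<lambda>(r, h). Reject r h) ` rejS \<sigma>"
proof
  fix e assume e: "e \<in> set \<sigma>"
  show "e \<in> (\<lambda>(r, h). Propose r h) ` propS \<sigma> \<union> (\<lambda>(r, h). Reject r h) ` rejS \<sigma>"
  proof (cases e)
    case (Propose r h)
    then have "(r, h) \<in> propS \<sigma>" using e by (simp add: propS_def)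
    then show ?thesis using Propose by (auto intro: rev_image_eqI)
  next
    case (Reject r h)
    then have "(r, h) \<in> rejS \<sigma>" using e by (simp add: rejS_def)
    then show ?thesis using Reject by (auto intro: rev_image_eqI)
  qed
qed

lemma wf_instance_rlist_range: "wf_instance R H q J \<Longrightarrow> h \<in> set (rlist J r) \<Longrightarrow> r \<in> R \<and> h \<in> H"
  unfolding wf_instance_def by (metis empty_iff list.set(1) subsetD)

lemma feasible_length_le:
  assumes "wf_instance R H q J" "feasible q J \<sigma>"
  shows "length \<sigma> \<le> 2 * card (R \<times> H)"
proof -
  have fin: "finite (R \<times> H)" using assms(1) unfolding wf_instance_def by blast
  have props: "propS \<sigma> \<subseteq> R \<times> H"
    by (auto dest: feasible_propS_in_rlist[OF assms(2)] wf_instance_rlist_range[OF assms(1)])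
  have rej: "rejS \<sigma> \<subseteq> R \<times> H" using props feasible_rejS_subset_propS[OF assms(2)] by blast
  have "length \<sigma> = card (set \<sigma>)" using feasible_distinct[OF assms(2)] by (simp add: distinct_card)
  also have "\<dots> \<le> card ((\<lambda>(r, h). Propose r h) ` propS \<sigma> \<union> (\<lambda>(r, h). Reject r h) ` rejS \<sigma>)"
    using props rej fin by (intro card_mono[OF _ set_events_subset]) (auto intro: finite_subset)
  also have "\<dots> \<le> card (propS \<sigma>) + card (rejS \<sigma>)"
    by (rule order.trans[OF card_Un_le add_mono[OF card_image_le card_image_le]])
      (use props rej fin in \<open>auto intro: finite_subset\<close>)
  also have "\<dots> \<le> 2 * card (R \<times> H)"
    using card_mono[OF fin props] card_mono[OF fin rej] by simp
  finally show ?thesis .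
qed

lemma maximal_feasible_msq:
  assumes "wf_instance R H q J"
  shows "maximal_feasible q J (msq q J)"
proof -
  have "\<forall>\<tau>. feasible q J \<tau> \<longrightarrow> length \<tau> < Suc (2 * card (R \<times> H))"
    using feasible_length_le[OF assms] by (simp add: less_Suc_eq_le)
  then obtain \<sigma> where \<sigma>: "feasible q J \<sigma>" "\<And>\<tau>. feasible q J \<tau> \<Longrightarrow> length \<tau> \<le> length \<sigma>"
    using Lattices_Big.ex_has_greatest_nat[of "feasible q J" "[]" length, OF feasible_Nil] by blast
  have "maximal_feasible q J \<sigma>"
    unfolding maximal_feasible_def
  proof (intro conjI notI)
    assume "\<exists>e. feasible q J (\<sigma> @ [e])"
    then obtain e where "feasible q J (\<sigma> @ [e])" by blast
    from \<sigma>(2)[OF this] show False by simp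
  qed (rule \<sigma>(1))
  then show ?thesis unfolding msq_def by (rule someI)
qed

lemma maximal_feasible_rejS:
  assumes "maximal_feasible q J \<sigma>"
  shows "rejS \<sigma> = {(r, h). ousted q J (propS \<sigma>) r h}"
proof -
  have "feasible q J \<sigma>" using assms unfolding maximal_feasible_def by blast
  then have "rejS \<sigma> \<subseteq> {(r, h). ousted q J (propS \<sigma>) r h}"
    by (induction rule: feasible.induct) (auto intro: ousted_mono)
  moreover have "(r, h) \<in> rejS \<sigma>" if "ousted q J (propS \<sigma>) r h" for r h
  proof (rule ccontr)
    assume "(r, h) \<notin> rejS \<sigma>"
    with \<open>feasible q J \<sigma>\<close> that have "feasible q J (\<sigma> @ [Reject r h])" by (rule feasible_Rej)
    with assms show False unfolding maximal_feasible_def by blast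
  qed
  ultimately show ?thesis by blast
qed

lemma feasible_le_maximal:
  assumes "feasible q J \<sigma>" "maximal_feasible q J \<tau>"
  shows "propS \<sigma> \<subseteq> propS \<tau> \<and> rejS \<sigma> \<subseteq> rejS \<tau>"
  using assms(1)
proof (induction rule: feasible.induct)
  case feasible_Nil
  then show ?case by (simp add: propS_def rejS_def)
next
  case (feasible_Prop \<sigma> r h)
  have \<tau>: "feasible q J \<tau>" using assms(2) unfolding maximal_feasible_def by blast
  have before: "\<forall>h'. precedes_in (rlist J r) h' h \<longrightarrow> (r, h') \<in> rejS \<tau>"
    using feasible_Prop.IH feasible_Prop.hyps(5) by blast
  have "(r, h) \<in> propS \<tau>"
  proof (rule ccontr)
    assume not_prop: "(r, h) \<notin> propS \<tau>"
    have "r \<in> res (tentS \<tau>)"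
    proof (rule ccontr)
      assume "r \<notin> res (tentS \<tau>)"
      from feasible.feasible_Prop[OF \<tau> this not_prop feasible_Prop.hyps(4) before]
      show False using assms(2) unfolding maximal_feasible_def by blast
    qed
    then obtain h2 where h2: "(r, h2) \<in> propS \<tau>" "(r, h2) \<notin> rejS \<tau>"
      by (auto simp: tentS_def)
    have "h2 \<noteq> h" using h2 not_prop by auto
    moreover have h2_list: "h2 \<in> set (rlist J r)"
      and h2_before: "\<forall>h'. precedes_in (rlist J r) h' h2 \<longrightarrow> (r, h') \<in> rejS \<tau>"
      using feasible_propS_in_rlist[OF \<tau> h2(1)] by blast+
    ultimately consider "precedes_in (rlist J r) h2 h" | "precedes_in (rlist J r) h h2"
      using precedes_in_total[OF h2_list feasible_Prop.hyps(4)] by blast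
    then show False
    proof cases
      case 1
      then show False using before h2(2) by blast
    next
      case 2
      then have "(r, h) \<in> rejS \<tau>" using h2_before by blast
      then show False using feasible_rejS_subset_propS[OF \<tau>] not_prop by blast
    qed
  qed
  then show ?case unfolding propS_snoc_Propose rejS_snoc_Propose using feasible_Prop.IH by blast
next
  case (feasible_Rej \<sigma> r h)
  have "ousted q J (propS \<tau>) r h"
    using ousted_mono[OF feasible_Rej.hyps(2)] feasible_Rej.IH by blast
  then have "(r, h) \<in> rejS \<tau>" using maximal_feasible_rejS[OF assms(2)] by blast
  then show ?case unfolding propS_snoc_Reject rejS_snoc_Reject using feasible_Rej.IH by blast
qed

lemma propI_subset_rlist:
  assumes "wf_instance R H q J"
  shows "propI q J \<subseteq> {(r, h). h \<in> set (rlist J r)}"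
proof -
  have "feasible q J (msq q J)"
    using maximal_feasible_msq[OF assms] unfolding maximal_feasible_def by blast
  then show ?thesis unfolding propI_def by (auto dest: feasible_propS_in_rlist)
qed

lemma tentI_eq:
  assumes "wf_instance R H q J"
  shows "tentI q J = {(r, h) \<in> propI q J. \<not> ousted q J (propI q J) r h}"
  using maximal_feasible_rejS[OF maximal_feasible_msq[OF assms]]
  unfolding tentI_def propI_def tentS_def by auto

lemma tentI_functional:
  assumes "wf_instance R H q J" "(r, h) \<in> tentI q J" "(r, h') \<in> tentI q J"
  shows "h = h'"
proof -
  have "feasible q J (msq q J)"
    using maximal_feasible_msq[OF assms(1)] unfolding maximal_feasible_def by blast
  then show ?thesis using assms(2,3) unfolding tentI_def by (rule feasible_tentS_functional)
qed

lemma pendI_eq: "pendI q J = {(r, h) \<in> tentI q J. r \<notin> set (hlist J h)}"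
  unfolding pendI_def pendS_def tentI_def ..

lemma tentI_subset_range:
  assumes "wf_instance R H q J"
  shows "tentI q J \<subseteq> R \<times> H"
  using tentI_eq[OF assms] propI_subset_rlist[OF assms] wf_instance_rlist_range[OF assms] by fast

context
  fixes R H q I P X
  assumes prescription: "prescription R H q I P X"
begin

lemma prescription_range: "P \<subseteq> R \<times> H" "X \<subseteq> R \<times> H"
  and prescription_disjoint: "P \<inter> propI q I = {}"
  and prescription_functional: "(r, h) \<in> P \<Longrightarrow> (r, h') \<in> P \<Longrightarrow> h = h'"
  and prescription_tentative: "X \<subseteq> tentI q I"
  and prescription_res: "res P \<inter> res (tentI q I) \<subseteq> res X"
  and prescription_quota: "h \<in> H \<Longrightarrow> card (res_at h (P \<union> (tentI q I - X))) \<le> q h"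
  and prescription_quota_eq:
    "h \<in> H \<Longrightarrow> res_at h X \<noteq> {} \<Longrightarrow> card (res_at h (P \<union> (tentI q I - X))) = q h"
  and prescription_precedes:
    "h \<in> H \<Longrightarrow> a \<in> res_at h (P \<union> ((tentI q I - pendI q I) - X)) \<Longrightarrow>
      b \<in> res_at h (X - pendI q I) \<Longrightarrow> precedes_in (hlist I h) a b"
  and prescription_pending:
    "h \<in> H \<Longrightarrow> res_at h (X - pendI q I) \<noteq> {} \<Longrightarrow> res_at h (pendI q I) \<subseteq> res_at h X"
  using prescription unfolding prescription_def by simp_all

end

lemma prescriptionI:
  assumes "resident_minimal q I" "P \<subseteq> R \<times> H" "X \<subseteq> R \<times> H" "P \<inter> propI q I = {}"
    and "\<And>r h h'. (r, h) \<in> P \<Longrightarrow> (r, h') \<in> P \<Longrightarrow> h = h'"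
    and "X \<subseteq> tentI q I" "res P \<inter> res (tentI q I) \<subseteq> res X"
    and "\<And>h. h \<in> H \<Longrightarrow> card (res_at h (P \<union> (tentI q I - X))) \<le> q h"
    and "\<And>h. h \<in> H \<Longrightarrow> res_at h X \<noteq> {} \<Longrightarrow> card (res_at h (P \<union> (tentI q I - X))) = q h"
    and "\<And>h a b. h \<in> H \<Longrightarrow> a \<in> res_at h (P \<union> ((tentI q I - pendI q I) - X)) \<Longrightarrow>
      b \<in> res_at h (X - pendI q I) \<Longrightarrow> precedes_in (hlist I h) a b"
    and "\<And>h. h \<in> H \<Longrightarrow> res_at h (X - pendI q I) \<noteq> {} \<Longrightarrow> res_at h (pendI q I) \<subseteq> res_at h X"
  shows "prescription R H q I P X"
  unfolding prescription_def using assms by (intro conjI ballI allI impI) simp_all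

section \<open>Completing the hospital lists\<close>

definition list_of :: "'a set \<Rightarrow> 'a list" where
  "list_of S = (SOME xs. set xs = S \<and> distinct xs)"

lemma set_list_of: "finite S \<Longrightarrow> set (list_of S) = S"
  and distinct_list_of: "finite S \<Longrightarrow> distinct (list_of S)"
  unfolding list_of_def by (metis (mono_tags, lifting) finite_distinct_list someI_ex)+

definition complete_list :: "'a set \<Rightarrow> 'a set \<Rightarrow> 'a list \<Rightarrow> 'a list" where
  "complete_list U F L = L @ list_of (F - set L) @ list_of (U - set L - F)"

context
  fixes U F :: "'a set"
  assumes finite: "finite U" and front: "F \<subseteq> U"
begin

private lemma finite_parts: "finite (F - S)" "finite (U - S - F)"
  using finite front by (auto intro: finite_subset)

lemma set_complete_list: "set (complete_list U F L) = U \<union> set L"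
  using front
  by (auto simp: complete_list_def set_list_of[OF finite_parts(1)] set_list_of[OF finite_parts(2)])

lemma distinct_complete_list: "distinct L \<Longrightarrow> distinct (complete_list U F L)"
  by (auto simp: complete_list_def set_list_of finite_parts distinct_list_of)

lemma precedes_in_complete_list:
  assumes "a \<in> set L \<union> F" "b \<in> U - set L - F"
  shows "precedes_in (complete_list U F L) a b"
proof -
  have "a \<in> set (L @ list_of (F - set L))" "b \<in> set (list_of (U - set L - F))"
    using assms by (auto simp: set_list_of finite_parts)
  then show ?thesis
    unfolding complete_list_def using precedes_in_append_cross by fastforce
qed

lemma set_takeWhile_complete_list:
  assumes "r \<in> F"
  shows "set (takeWhile (\<lambda>x. x \<noteq> r) (complete_list U F L)) \<subseteq> set L \<union> F"
proof -
  have "r \<in> set (L @ list_of (F - set L))" using assms by (auto simp: set_list_of finite_parts)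
  then have "takeWhile (\<lambda>x. x \<noteq> r) ((L @ list_of (F - set L)) @ list_of (U - set L - F)) =
      takeWhile (\<lambda>x. x \<noteq> r) (L @ list_of (F - set L))"
    by (rule takeWhile_append1) simp
  then have "takeWhile (\<lambda>x. x \<noteq> r) (complete_list U F L) =
      takeWhile (\<lambda>x. x \<noteq> r) (L @ list_of (F - set L))"
    unfolding complete_list_def by simp
  then show ?thesis by (auto dest: set_takeWhileD simp: set_list_of finite_parts)
qed

end

definition complete_instance ::
  "'r set \<Rightarrow> 'h set \<Rightarrow> ('h \<Rightarrow> 'r set) \<Rightarrow> ('r, 'h) sm_instance \<Rightarrow> ('r, 'h) sm_instance" where
  "complete_instance R H F I =
     I\<lparr>hlist := \<lambda>h. if h \<in> H then complete_list R (F h) (hlist I h) else []\<rparr>"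

lemma rlist_complete_instance [simp]: "rlist (complete_instance R H F I) = rlist I"
  by (simp add: complete_instance_def)

lemma hlist_complete_instance [simp]:
  "h \<in> H \<Longrightarrow> hlist (complete_instance R H F I) h = complete_list R (F h) (hlist I h)"
  by (simp add: complete_instance_def)

lemma complete_instance:
  assumes "wf_instance R H q I" "\<And>h. F h \<subseteq> R"
  shows "wf_instance R H q (complete_instance R H F I)"
    and "is_extension R H I (complete_instance R H F I)"
    and "resident_changeless R I (complete_instance R H F I)"
    and "hospital_complete R H (complete_instance R H F I)"
proof -
  have fin: "finite R" and lists: "\<And>h. h \<in> H \<Longrightarrow> set (hlist I h) \<subseteq> R \<and> distinct (hlist I h)"
    using assms(1) unfolding wf_instance_def by blast+
  have set: "set (hlist (complete_instance R H F I) h) = R" if "h \<in> H" for h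
    using set_complete_list[OF fin assms(2)] lists[OF that] that by auto
  show "wf_instance R H q (complete_instance R H F I)"
    using assms(1) set distinct_complete_list[OF fin assms(2)] lists
    unfolding wf_instance_def by (auto simp: complete_instance_def)
  show "is_extension R H I (complete_instance R H F I)"
    unfolding is_extension_def by (simp add: complete_list_def)
  show "resident_changeless R I (complete_instance R H F I)"
    unfolding resident_changeless_def by simp
  show "hospital_complete R H (complete_instance R H F I)"
    unfolding hospital_complete_def using set by blast
qed

section \<open>Resident-changeless hospital-complete extensions\<close>

locale minimal_instance =
  fixes R :: "'r set" and H :: "'h set" and q :: "'h \<Rightarrow> nat" and I :: "('r, 'h) sm_instance"
  assumes wf: "wf_instance R H q I" and minimal: "resident_minimal q I"

locale changeless_completion = minimal_instance +
  fixes I' :: "('r, 'h) sm_instance"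
  assumes wf': "wf_instance R H q I'" and extension: "is_extension R H I I'"
    and changeless: "resident_changeless R I I'" and complete: "hospital_complete R H I'"
begin

lemma hlist_extension: "\<exists>ys. hlist I' h = hlist I h @ ys"
  using extension wf wf' unfolding is_extension_def wf_instance_def by (cases "h \<in> H") auto

lemma rlist_changeless: "rlist I' = rlist I"
proof
  fix r show "rlist I' r = rlist I r"
    using changeless wf wf' unfolding resident_changeless_def wf_instance_def by (cases "r \<in> R") auto
qed

lemma feasible_completion: "feasible q I \<sigma> \<Longrightarrow> feasible q I' \<sigma>"
proof (induction rule: feasible.induct)
  case feasible_Nil
  then show ?case by (rule feasible.feasible_Nil)
next
  case (feasible_Prop \<sigma> r h)
  have "h \<in> set (rlist I' r)" "\<forall>h'. precedes_in (rlist I' r) h' h \<longrightarrow> (r, h') \<in> rejS \<sigma>"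
    using feasible_Prop.hyps(4,5) by (simp_all add: rlist_changeless)
  then show ?case by (rule feasible.feasible_Prop[OF feasible_Prop.IH feasible_Prop.hyps(2,3)])
next
  case (feasible_Rej \<sigma> r h)
  moreover obtain ys where "hlist I' h = hlist I h @ ys" using hlist_extension by blast
  ultimately show ?case using feasible.feasible_Rej ousted_append by metis
qed

lemma propI_completion: "propI q I' = propI q I"
proof
  have "feasible q I' (msq q I)"
    using feasible_completion maximal_feasible_msq[OF wf] unfolding maximal_feasible_def by blast
  then show "propI q I \<subseteq> propI q I'"
    using feasible_le_maximal maximal_feasible_msq[OF wf'] unfolding propI_def by blast
  show "propI q I' \<subseteq> propI q I"
    using propI_subset_rlist[OF wf'] minimal unfolding resident_minimal_def rlist_changeless by blast
qed

lemma minimal_completion: "resident_minimal q I'"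
  using minimal unfolding resident_minimal_def propI_completion rlist_changeless .

lemma tentI_completion_subset: "tentI q I' \<subseteq> tentI q I"
proof
  fix x assume x: "x \<in> tentI q I'"
  obtain r h where [simp]: "x = (r, h)" by fastforce
  obtain ys where "hlist I' h = hlist I h @ ys" using hlist_extension by blast
  then show "x \<in> tentI q I"
    using x ousted_append[of I' h I ys q "propI q I" r]
    unfolding tentI_eq[OF wf] tentI_eq[OF wf'] propI_completion by auto
qed

lemma tentI_completion_if_listed:
  assumes "(r, h) \<in> tentI q I" "r \<in> set (hlist I h)"
  shows "(r, h) \<in> tentI q I'"
proof -
  obtain ys where "hlist I' h = hlist I h @ ys" using hlist_extension by blast
  then show ?thesis
    using assms ousted_appendD[of I' h I ys r q "propI q I"]
    unfolding tentI_eq[OF wf] tentI_eq[OF wf'] propI_completion by auto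
qed

lemma pendI_completion: "pendI q I' = {}"
  using tentI_subset_range[OF wf'] complete unfolding pendI_eq hospital_complete_def by fast

lemma quota_filled_if_rejected_in_completion:
  assumes "(r, h) \<in> tentI q I - tentI q I'"
  shows "q h \<le> card (res_at h (tentI q I'))"
proof -
  have h: "h \<in> H" using assms tentI_subset_range[OF wf] by blast
  have "ousted q I' (propI q I') r h"
    using assms unfolding tentI_eq[OF wf] tentI_eq[OF wf'] propI_completion by auto
  then have "q h \<le> card {x \<in> set (hlist I' h). (x, h) \<in> propI q I' \<and> \<not> ousted q I' (propI q I') x h}"
    using wf' h unfolding wf_instance_def by (blast intro: ousted_imp_quota_unousted)
  also have "\<dots> \<le> card (res_at h (tentI q I'))"
    using wf' tentI_subset_range[OF wf'] unfolding wf_instance_def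
    by (intro card_mono finite_res_at) (auto simp: tentI_eq[OF wf'])
  finally show ?thesis .
qed

context
  fixes P Y
  assumes prescription': "prescription R H q I' P Y"
begin

lemma tentI_diff_restriction: "tentI q I - (Y \<union> (tentI q I - tentI q I')) = tentI q I' - Y"
  using tentI_completion_subset prescription_tentative[OF prescription'] by blast

lemma restriction_unpending:
  assumes "(b, h) \<in> (Y \<union> (tentI q I - tentI q I')) - pendI q I"
  shows "(b, h) \<in> Y \<and> b \<in> set (hlist I h)"
proof -
  have "(b, h) \<in> tentI q I"
    using assms tentI_completion_subset prescription_tentative[OF prescription'] by blast
  with assms have "b \<in> set (hlist I h)" unfolding pendI_eq by blast
  with \<open>(b, h) \<in> tentI q I\<close> have "(b, h) \<in> tentI q I'" by (rule tentI_completion_if_listed)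
  with assms \<open>b \<in> set (hlist I h)\<close> show ?thesis by blast
qed

lemma precedes_restriction:
  assumes "h \<in> H" "a \<in> res_at h (P \<union> (tentI q I' - Y))" "(b, h) \<in> Y" "b \<in> set (hlist I h)"
  shows "precedes_in (hlist I h) a b"
proof -
  obtain ys where ys: "hlist I' h = hlist I h @ ys" using hlist_extension by blast
  have "precedes_in (hlist I h @ ys) a b"
    using prescription_precedes[OF prescription' assms(1)] assms(2,3)
    by (simp add: pendI_completion flip: ys)
  moreover have "distinct (hlist I h @ ys)"
    using wf' assms(1) unfolding wf_instance_def ys[symmetric] by blast
  ultimately show ?thesis by (rule precedes_in_append_leftD[OF _ _ assms(4)])
qed

lemma quota_eq_restriction:
  assumes "h \<in> H" "res_at h (Y \<union> (tentI q I - tentI q I')) \<noteq> {}"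
  shows "card (res_at h (P \<union> (tentI q I' - Y))) = q h"
proof (cases "res_at h Y = {}")
  case True
  then obtain r where "(r, h) \<in> tentI q I - tentI q I'"
    using assms(2) unfolding res_at_def by blast
  then have "q h \<le> card (res_at h (tentI q I'))" by (rule quota_filled_if_rejected_in_completion)
  also have "\<dots> \<le> card (res_at h (P \<union> (tentI q I' - Y)))"
  proof (rule card_mono)
    show "finite (res_at h (P \<union> (tentI q I' - Y)))"
      using prescription_range[OF prescription'] tentI_subset_range[OF wf'] wf'
      unfolding wf_instance_def by (intro finite_res_at[of _ R H]) auto
    show "res_at h (tentI q I') \<subseteq> res_at h (P \<union> (tentI q I' - Y))"
      using True unfolding res_at_def by blast
  qed
  finally show ?thesis using prescription_quota[OF prescription' assms(1)] by simp
next
  case False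
  then show ?thesis using prescription_quota_eq[OF prescription' assms(1)] by blast
qed

lemma prescription_restriction: "prescription R H q I P (Y \<union> (tentI q I - tentI q I'))"
proof (rule prescriptionI)
  let ?X = "Y \<union> (tentI q I - tentI q I')"
  show "?X \<subseteq> tentI q I"
    using tentI_completion_subset prescription_tentative[OF prescription'] by blast
  then show "?X \<subseteq> R \<times> H" using tentI_subset_range[OF wf] by blast
  show "res P \<inter> res (tentI q I) \<subseteq> res ?X"
  proof
    fix r assume "r \<in> res P \<inter> res (tentI q I)"
    then obtain h where "r \<in> res P" "(r, h) \<in> tentI q I" by auto
    show "r \<in> res ?X"
    proof (cases "(r, h) \<in> tentI q I'")
      case True
      then have "r \<in> res P \<inter> res (tentI q I')" using \<open>r \<in> res P\<close> by auto
      then have "r \<in> res Y" using prescription_res[OF prescription'] by blast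
      then show ?thesis by auto
    next
      case False
      then show ?thesis using \<open>(r, h) \<in> tentI q I\<close> by auto
    qed
  qed
  show "card (res_at h (P \<union> (tentI q I - ?X))) \<le> q h" if "h \<in> H" for h
    using prescription_quota[OF prescription' that] by (simp add: tentI_diff_restriction)
  show "card (res_at h (P \<union> (tentI q I - ?X))) = q h" if "h \<in> H" "res_at h ?X \<noteq> {}" for h
    using quota_eq_restriction[OF that] by (simp add: tentI_diff_restriction)
  show "precedes_in (hlist I h) a b"
    if "h \<in> H" "a \<in> res_at h (P \<union> (tentI q I - pendI q I - ?X))"
      "b \<in> res_at h (?X - pendI q I)" for h a b
  proof -
    have "(a, h) \<in> P \<union> (tentI q I - ?X)" using that(2) by auto
    then have "a \<in> res_at h (P \<union> (tentI q I' - Y))" unfolding tentI_diff_restriction by simp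
    moreover have "(b, h) \<in> Y \<and> b \<in> set (hlist I h)"
      by (rule restriction_unpending) (use that(3) in simp)
    ultimately show ?thesis using precedes_restriction[OF that(1)] by blast
  qed
  show "res_at h (pendI q I) \<subseteq> res_at h ?X"
    if hH: "h \<in> H" and nonempty: "res_at h (?X - pendI q I) \<noteq> {}" for h
  proof
    fix p assume "p \<in> res_at h (pendI q I)"
    then have p: "p \<notin> set (hlist I h)" "(p, h) \<in> tentI q I" unfolding pendI_eq by auto
    obtain b where "(b, h) \<in> ?X - pendI q I" using nonempty unfolding res_at_def by blast
    then have b: "(b, h) \<in> Y" "b \<in> set (hlist I h)" using restriction_unpending by blast+
    show "p \<in> res_at h ?X"
    proof (rule ccontr)
      assume "p \<notin> res_at h ?X"
      with p(2) have "p \<in> res_at h (P \<union> (tentI q I' - Y))"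
        unfolding tentI_diff_restriction[symmetric] by simp
      then have "precedes_in (hlist I h) p b" by (rule precedes_restriction[OF hH _ b])
      then show False using precedes_in_mem p(1) by fast
    qed
  qed
  show "resident_minimal q I" by (rule minimal)
  show "P \<subseteq> R \<times> H" by (rule prescription_range(1)[OF prescription'])
  show "P \<inter> propI q I = {}"
    using prescription_disjoint[OF prescription'] by (simp add: propI_completion)
  show "h = h'" if "(r, h) \<in> P" "(r, h') \<in> P" for r h h'
    using prescription_functional[OF prescription' that] .
qed

end

end

locale prescribed_instance = minimal_instance +
  fixes P X :: "('r \<times> 'h) set"
  assumes prescription: "prescription R H q I P X"
begin

text \<open>Residents put first on the completed list of h; the pending residents in X go behind them.\<close>
definition front :: "'h \<Rightarrow> 'r set" where
  "front h = res_at h P \<union> res_at h (pendI q I - X)"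

definition completion :: "('r, 'h) sm_instance" where
  "completion = complete_instance R H front I"

lemma front_subset: "front h \<subseteq> R"
  using prescription_range[OF prescription] tentI_subset_range[OF wf]
  unfolding front_def pendI_eq by auto

sublocale changeless_completion R H q I completion
  using complete_instance[OF wf, where F = front, OF front_subset] unfolding completion_def
  by unfold_locales (auto intro: minimal)

lemma hlist_completion: "h \<in> H \<Longrightarrow> hlist completion h = complete_list R (front h) (hlist I h)"
  by (simp add: completion_def)

lemma listed_tentative_if_pending_unprescribed:
  assumes "(r, h) \<in> pendI q I - X" "x \<in> set (hlist I h)" "(x, h) \<in> propI q I"
  shows "(x, h) \<in> tentI q I - X"
proof -
  have r: "(r, h) \<in> propI q I" "\<not> ousted q I (propI q I) r h" "r \<notin> set (hlist I h)"
    using assms(1) unfolding pendI_eq tentI_eq[OF wf] by auto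
  then have "\<not> ousted q I (propI q I) x h" unfolding ousted_def by auto
  then have x: "(x, h) \<in> tentI q I" using assms(3) unfolding tentI_eq[OF wf] by simp
  have h: "h \<in> H" using assms(1) tentI_subset_range[OF wf] unfolding pendI_eq by auto
  have "(x, h) \<notin> X"
  proof
    assume "(x, h) \<in> X"
    then have "res_at h (X - pendI q I) \<noteq> {}" using assms(2) unfolding pendI_eq by auto
    then have "res_at h (pendI q I) \<subseteq> res_at h X" by (rule prescription_pending[OF prescription h])
    then show False using assms(1) by auto
  qed
  with x show ?thesis by simp
qed

lemma predecessors_in_completion:
  assumes "(r, h) \<in> pendI q I - X"
  shows "set (takeWhile (\<lambda>x. x \<noteq> r) (hlist completion h)) \<inter> res_at h (propI q I)
    \<subseteq> res_at h (tentI q I - X) - {r}"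
proof
  fix x assume x: "x \<in> set (takeWhile (\<lambda>x. x \<noteq> r) (hlist completion h)) \<inter> res_at h (propI q I)"
  have h: "h \<in> H" using assms tentI_subset_range[OF wf] unfolding pendI_eq by auto
  have "r \<in> front h" using assms unfolding front_def by simp
  then have "x \<in> set (hlist I h) \<union> front h" "x \<noteq> r"
    using x set_takeWhile_complete_list[OF _ front_subset] wf
    unfolding hlist_completion[OF h] wf_instance_def by (auto dest: set_takeWhileD)
  moreover have "(x, h) \<notin> P" using x prescription_disjoint[OF prescription] by auto
  ultimately show "x \<in> res_at h (tentI q I - X) - {r}"
    using listed_tentative_if_pending_unprescribed[OF assms] x
    unfolding front_def pendI_eq by auto
qed

lemma tentI_completion_if_unprescribed:
  assumes "(r, h) \<in> tentI q I - X"
  shows "(r, h) \<in> tentI q completion"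
proof (cases "r \<in> set (hlist I h)")
  case True
  with assms show ?thesis using tentI_completion_if_listed by blast
next
  case False
  with assms have pending: "(r, h) \<in> pendI q I - X" unfolding pendI_eq by simp
  have h: "h \<in> H" and fin: "finite (res_at h (P \<union> (tentI q I - X)))"
    using assms prescription_range[OF prescription] tentI_subset_range[OF wf] wf
    unfolding wf_instance_def by (auto intro: finite_res_at[of _ R H])
  have fin': "finite (res_at h (tentI q I - X))" by (rule finite_subset[OF _ fin]) auto
  have "card (set (takeWhile (\<lambda>x. x \<noteq> r) (hlist completion h)) \<inter> res_at h (propI q I))
      \<le> card (res_at h (tentI q I - X) - {r})"
    by (rule card_mono[OF _ predecessors_in_completion[OF pending]]) (use fin' in auto)
  also have "\<dots> < card (res_at h (tentI q I - X))"
    using assms fin' by (intro card_Diff1_less) auto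
  also have "\<dots> \<le> card (res_at h (P \<union> (tentI q I - X)))"
    using fin by (intro card_mono) auto
  also have "\<dots> \<le> q h" by (rule prescription_quota[OF prescription h])
  finally have "card (set (takeWhile (\<lambda>x. x \<noteq> r) (hlist completion h)) \<inter> res_at h (propI q I))
      < q h" .
  moreover have "r \<in> set (hlist completion h)"
    using complete h assms tentI_subset_range[OF wf] unfolding hospital_complete_def by auto
  ultimately have "\<not> ousted q completion (propI q I) r h" unfolding ousted_def by auto
  then show ?thesis
    using assms unfolding tentI_eq[OF wf] tentI_eq[OF wf'] propI_completion by auto
qed

lemma tentI_diff_completion: "tentI q completion - (X \<inter> tentI q completion) = tentI q I - X"
  using tentI_completion_subset by (auto intro: tentI_completion_if_unprescribed)

lemma precedes_completion:
  assumes "h \<in> H" "a \<in> res_at h (P \<union> (tentI q I - X))" "(b, h) \<in> X"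
  shows "precedes_in (hlist completion h) a b"
proof (cases "b \<in> set (hlist I h)")
  case True
  then have b: "b \<in> res_at h (X - pendI q I)" using assms(3) unfolding pendI_eq by simp
  have "res_at h (pendI q I) \<subseteq> res_at h X"
    by (rule prescription_pending[OF prescription assms(1)]) (use b in blast)
  moreover have "(a, h) \<notin> P \<inter> pendI q I"
    using prescription_disjoint[OF prescription] tentI_eq[OF wf] unfolding pendI_eq by blast
  ultimately have "a \<in> res_at h (P \<union> (tentI q I - pendI q I - X))" using assms(2) by auto
  then have "precedes_in (hlist I h) a b"
    using prescription_precedes[OF prescription assms(1)] b by blast
  then show ?thesis unfolding hlist_completion[OF assms(1)] complete_list_def
    by (rule precedes_in_append_left)
next
  case False
  have fin: "finite R" using wf unfolding wf_instance_def by blast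
  have "(b, h) \<notin> P" using assms(3) prescription_tentative[OF prescription]
      prescription_disjoint[OF prescription] tentI_eq[OF wf] by blast
  moreover have "b \<in> R" using assms(3) prescription_range(2)[OF prescription] by blast
  ultimately have "b \<in> R - set (hlist I h) - front h"
    using False assms(3) unfolding front_def by auto
  moreover have "a \<in> set (hlist I h) \<union> front h"
    using assms(2) unfolding front_def pendI_eq by auto
  ultimately show ?thesis
    unfolding hlist_completion[OF assms(1)]
    by (rule precedes_in_complete_list[OF fin front_subset, rotated])
qed

lemma prescription_completion: "prescription R H q completion P (X \<inter> tentI q completion)"
proof (rule prescriptionI)
  show "res P \<inter> res (tentI q completion) \<subseteq> res (X \<inter> tentI q completion)"
  proof
    fix r assume "r \<in> res P \<inter> res (tentI q completion)"
    then obtain h where h: "r \<in> res P" "(r, h) \<in> tentI q completion" by auto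
    then have "r \<in> res P \<inter> res (tentI q I)" using tentI_completion_subset by auto
    then have "r \<in> res X" using prescription_res[OF prescription] by blast
    then obtain h' where h': "(r, h') \<in> X" by auto
    have "h = h'"
      using tentI_functional[OF wf] h(2) h' tentI_completion_subset
        prescription_tentative[OF prescription] by blast
    with h(2) h' show "r \<in> res (X \<inter> tentI q completion)" by auto
  qed
  show "card (res_at h (P \<union> (tentI q completion - X \<inter> tentI q completion))) \<le> q h"
    if "h \<in> H" for h
    using prescription_quota[OF prescription that] by (simp add: tentI_diff_completion)
  show "card (res_at h (P \<union> (tentI q completion - X \<inter> tentI q completion))) = q h"
    if "h \<in> H" "res_at h (X \<inter> tentI q completion) \<noteq> {}" for h
    using prescription_quota_eq[OF prescription that(1)] that(2)
    by (auto simp: tentI_diff_completion res_at_def)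
  show "precedes_in (hlist completion h) a b"
    if "h \<in> H"
      "a \<in> res_at h (P \<union> (tentI q completion - pendI q completion - X \<inter> tentI q completion))"
      "b \<in> res_at h (X \<inter> tentI q completion - pendI q completion)" for h a b
    using precedes_completion[OF that(1)] that(2,3) tentI_diff_completion
    by (simp add: pendI_completion)
  show "res_at h (pendI q completion) \<subseteq> res_at h (X \<inter> tentI q completion)" for h
    by (simp add: pendI_completion res_at_def)
  show "X \<inter> tentI q completion \<subseteq> R \<times> H" using tentI_subset_range[OF wf'] by blast
qed (use prescription_range(1)[OF prescription] prescription_disjoint[OF prescription]
      prescription_functional[OF prescription] minimal_completion
      in \<open>simp_all add: propI_completion\<close>)

end

theorem theorem3:
  fixes R :: "'r set" and H :: "'h set" and q :: "'h \<Rightarrow> nat"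
    and I :: "('r, 'h) sm_instance" and r0 :: 'r and h0 :: 'h
  assumes "wf_instance R H q I"
    and "resident_minimal q I"
    and "(r0, h0) \<in> tentI q I - pendI q I"
  shows "(\<exists>P X. prescription R H q I P X \<and> (r0, h0) \<in> tgs P X) \<longleftrightarrow>
         (\<exists>I' P Y. wf_instance R H q I' \<and> is_extension R H I I' \<and>
                   resident_changeless R I I' \<and> hospital_complete R H I' \<and>
                   prescription R H q I' P Y \<and> (r0, h0) \<in> tgs P Y)"
    (is "?prescribed \<longleftrightarrow> ?completed")
proof
  assume ?prescribed
  then obtain P X where "prescription R H q I P X" and target: "(r0, h0) \<in> tgs P X" by blast
  with assms(1,2) interpret prescribed_instance R H q I P X by unfold_locales
  have "(r0, h0) \<in> tentI q completion"
    using assms(3) tentI_completion_if_listed unfolding pendI_eq by blast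
  with target have "(r0, h0) \<in> tgs P (X \<inter> tentI q completion)" unfolding tgs_def by blast
  with prescription_completion wf' extension changeless complete show ?completed by blast
next
  assume ?completed
  then obtain I' P Y where "wf_instance R H q I'" "is_extension R H I I'"
    "resident_changeless R I I'" "hospital_complete R H I'"
    and prescription': "prescription R H q I' P Y" and target: "(r0, h0) \<in> tgs P Y" by blast
  with assms(1,2) interpret changeless_completion R H q I I' by unfold_locales
  from target have "(r0, h0) \<in> tgs P (Y \<union> (tentI q I - tentI q I'))" unfolding tgs_def by blast
  with prescription_restriction[OF prescription'] show ?prescribed by blast
qed

end
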